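(* Let $G$ be a connected bipartite circulant graph and let $n\ge 1$. Then $K_{n,n} \otimes G$ is a circulant graph.
   Context: Graphs have no multiple edges but may have loops. The tensor product $G \otimes H$ of graphs $G$ and $H$ has vertex set $V(G)\times V(H)$, with $(g,h)$ adjacent to $(g',h')$ if and only if $g$ is adjacent to $g'$ in $G$ and $h$ is adjacent to $h'$ in $H$. $K_{n,n}$ denotes the complete bipartite graph with both parts of size $n$. For an integer $N\ge 1$ and a set $S$ of integers, the circulant graph $C_NS$ has vertex set $\{0,1,\dots,N-1\}$, with $i$ adjacent to $j$ if and only if $i-j \equiv \pm s \pmod N$ for some $s\in S$. A graph is circulant if it is isomorphic to some $C_NS$ (this includes disconnected graphs); equivalently, if it has an automorphism that permutes all its vertices in a single cycle. *)

theory Defs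
  imports Main
begin

type_synonym 'a graph = "'a set \<times> ('a \<times> 'a) set"

definition verts :: "'a graph \<Rightarrow> 'a set" where "verts G = fst G"
definition edges :: "'a graph \<Rightarrow> ('a \<times> 'a) set" where "edges G = snd G"

definition is_graph :: "'a graph \<Rightarrow> bool" where
  "is_graph G \<longleftrightarrow> finite (verts G) \<and> edges G \<subseteq> verts G \<times> verts G \<and> sym (edges G)"

definition connected_graph :: "'a graph \<Rightarrow> bool" where
  "connected_graph G \<longleftrightarrow> verts G \<noteq> {} \<and>
     (\<forall>u\<in>verts G. \<forall>v\<in>verts G. (u, v) \<in> (edges G)\<^sup>*)"

definition bipartite :: "'a graph \<Rightarrow> bool" where
  "bipartite G \<longleftrightarrow> (\<exists>A. \<forall>(u, v)\<in>edges G. (u \<in> A \<longleftrightarrow> v \<notin> A))"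

definition tensor :: "'a graph \<Rightarrow> 'b graph \<Rightarrow> ('a \<times> 'b) graph" where
  "tensor G H = (verts G \<times> verts H,
     {((g, h), (g', h')). (g, g') \<in> edges G \<and> (h, h') \<in> edges H})"

definition Knn :: "nat \<Rightarrow> nat graph" where
  "Knn n = ({0..<2*n}, {(i, j). i < 2*n \<and> j < 2*n \<and> (i < n \<longleftrightarrow> n \<le> j)})"

definition circ_graph :: "nat \<Rightarrow> int set \<Rightarrow> nat graph" where
  "circ_graph N S = ({0..<N}, {(i, j). i < N \<and> j < N \<and>
      (\<exists>s\<in>S. (int i - int j) mod int N = s mod int N \<or> (int i - int j) mod int N = (- s) mod int N)})"

definition graph_iso :: "'a graph \<Rightarrow> 'b graph \<Rightarrow> bool" where
  "graph_iso G H \<longleftrightarrow> (\<exists>f. bij_betw f (verts G) (verts H) \<and>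
     (\<forall>u\<in>verts G. \<forall>v\<in>verts G. (u, v) \<in> edges G \<longleftrightarrow> (f u, f v) \<in> edges H))"

definition circulant :: "'a graph \<Rightarrow> bool" where
  "circulant G \<longleftrightarrow> (\<exists>N S. N \<ge> 1 \<and> graph_iso G (circ_graph N S))"

end

theory Submission
  imports Defs
begin

(* Let f : V(G) \<rightarrow> Z_N exhibit G as circulant, so that v ~ w iff f v - f w lies in a symmetric
   set S modulo N, and let A be a colour class of G. Label (i, v) by b + 2 (f v + N (i mod n)),
   where the bit b records whether the side of i in K_{n,n} differs from the colour of v. Adjacent
   v, w have different colours, so (i, v) ~ (j, w) iff v ~ w and the bits agree, i.e. iff the label
   difference d is even and d/2 lies in S modulo N. This condition depends only on \<plusminus>d modulo 2Nn,
   and the labels biject onto {0..<2Nn}, so the tensor product is C_{2Nn} of that set. *)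

lemma neg_mod_eq_iff:
  fixes x y m :: int
  shows "(- x) mod m = y mod m \<longleftrightarrow> x mod m = (- y) mod m"
  by (metis mod_minus_eq minus_minus)

lemma add_mult_less_mult:
  fixes a b :: nat
  assumes "b < N" and "a < K"
  shows "b + N * a < N * K"
proof -
  have "b + N * a < N * Suc a" using \<open>b < N\<close> by simp
  also have "\<dots> \<le> N * K" using \<open>a < K\<close> by (metis Suc_leI mult_le_mono2)
  finally show ?thesis .
qed

lemma add_mult_eq_add_mult_iff:
  fixes a b a' b' :: nat
  assumes "b < N" and "b' < N"
  shows "b + N * a = b' + N * a' \<longleftrightarrow> b = b' \<and> a = a'"
proof -
  have "(b + N * a) mod N = b" and "(b + N * a) div N = a" if "b < N" for a b
    using that by simp_all
  then show ?thesis using assms by metis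
qed

definition periodic_symmetric :: "nat \<Rightarrow> (int \<Rightarrow> bool) \<Rightarrow> bool" where
  "periodic_symmetric M P \<longleftrightarrow> (\<forall>d k. P (d + int M * k) = P d) \<and> (\<forall>d. P (- d) = P d)"

definition circ_connection :: "nat \<Rightarrow> int set \<Rightarrow> int \<Rightarrow> bool" where
  "circ_connection N S d \<longleftrightarrow> (\<exists>s\<in>S. d mod int N = s mod int N \<or> d mod int N = (- s) mod int N)"

definition circulant_labelling :: "'a graph \<Rightarrow> nat \<Rightarrow> ('a \<Rightarrow> nat) \<Rightarrow> (int \<Rightarrow> bool) \<Rightarrow> bool" where
  "circulant_labelling G M \<phi> P \<longleftrightarrow> M \<ge> 1 \<and> periodic_symmetric M P \<and> bij_betw \<phi> (verts G) {0..<M} \<and>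
     (\<forall>u\<in>verts G. \<forall>v\<in>verts G. (u, v) \<in> edges G \<longleftrightarrow> P (int (\<phi> u) - int (\<phi> v)))"

lemma verts_circ_graph [simp]: "verts (circ_graph N S) = {0..<N}"
  by (simp add: verts_def circ_graph_def)

lemma edges_circ_graph_iff:
  "(x, y) \<in> edges (circ_graph N S) \<longleftrightarrow> x < N \<and> y < N \<and> circ_connection N S (int x - int y)"
  by (simp add: edges_def circ_graph_def circ_connection_def)

lemma periodic_symmetric_circ_connection: "periodic_symmetric N (circ_connection N S)"
  unfolding periodic_symmetric_def circ_connection_def
  by (auto simp: neg_mod_eq_iff)

lemma circ_connection_Collect:
  assumes "periodic_symmetric M P"
  shows "circ_connection M (Collect P) d \<longleftrightarrow> P d"
proof
  assume "circ_connection M (Collect P) d"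
  then obtain s where "P s" and "d mod int M = s mod int M \<or> d mod int M = (- s) mod int M"
    by (auto simp: circ_connection_def)
  then obtain t k where "P t" "d = t + int M * k"
    using assms by (metis mod_eqE periodic_symmetric_def)
  then show "P d"
    using assms by (simp add: periodic_symmetric_def)
qed (auto simp: circ_connection_def)

lemma circulant_iff_labelling: "circulant G \<longleftrightarrow> (\<exists>M \<phi> P. circulant_labelling G M \<phi> P)"
proof
  assume "circulant G"
  then obtain N S \<phi> where "N \<ge> 1" and \<phi>: "bij_betw \<phi> (verts G) {0..<N}"
    and "\<forall>u\<in>verts G. \<forall>v\<in>verts G. (u, v) \<in> edges G \<longleftrightarrow> (\<phi> u, \<phi> v) \<in> edges (circ_graph N S)"
    by (auto simp: circulant_def graph_iso_def)
  moreover have "\<phi> u < N" if "u \<in> verts G" for u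
    using \<phi> that by (auto dest: bij_betw_apply)
  ultimately have "circulant_labelling G N \<phi> (circ_connection N S)"
    by (simp add: circulant_labelling_def periodic_symmetric_circ_connection edges_circ_graph_iff)
  then show "\<exists>M \<phi> P. circulant_labelling G M \<phi> P" by blast
next
  assume "\<exists>M \<phi> P. circulant_labelling G M \<phi> P"
  then obtain M \<phi> P where "M \<ge> 1" and P: "periodic_symmetric M P"
    and \<phi>: "bij_betw \<phi> (verts G) {0..<M}"
    and E: "\<forall>u\<in>verts G. \<forall>v\<in>verts G. (u, v) \<in> edges G \<longleftrightarrow> P (int (\<phi> u) - int (\<phi> v))"
    by (auto simp: circulant_labelling_def)
  moreover have "\<phi> u < M" if "u \<in> verts G" for u
    using \<phi> that by (auto dest: bij_betw_apply)
  ultimately have "graph_iso G (circ_graph M (Collect P))"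
    unfolding graph_iso_def
    by (intro exI[of _ \<phi>]) (simp add: edges_circ_graph_iff circ_connection_Collect)
  then show "circulant G"
    using \<open>M \<ge> 1\<close> by (auto simp: circulant_def)
qed

lemma periodic_symmetric_mult:
  assumes "periodic_symmetric N P"
  shows "periodic_symmetric (N * n) P"
  using assms unfolding periodic_symmetric_def
  by (metis of_nat_mult mult.assoc)

lemma periodic_symmetric_double:
  assumes "periodic_symmetric K Q"
  shows "periodic_symmetric (2 * K) (\<lambda>d. even d \<and> Q (d div 2))"
proof -
  have "(d + int (2 * K) * k) div 2 = d div 2 + int K * k" if "even d" for d k
    using that by (auto elim!: evenE)
  moreover have "(- d) div 2 = - (d div 2)" if "even d" for d :: int
    using that by (auto elim!: evenE)
  ultimately show ?thesis
    using assms by (auto simp: periodic_symmetric_def)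
qed

definition tensor_Knn_label :: "nat \<Rightarrow> nat \<Rightarrow> ('a \<Rightarrow> nat) \<Rightarrow> 'a set \<Rightarrow> nat \<times> 'a \<Rightarrow> nat" where
  "tensor_Knn_label n N f A = (\<lambda>(i, v). of_bool ((n \<le> i) \<noteq> (v \<in> A)) + 2 * (f v + N * (i mod n)))"

lemma bij_betw_tensor_Knn_label:
  assumes f: "bij_betw f V {0..<N}" and "n \<ge> 1"
  shows "bij_betw (tensor_Knn_label n N f A) ({0..<2 * n} \<times> V) {0..<2 * (N * n)}"
proof -
  have fV: "f v < N" if "v \<in> V" for v
    using f that by (auto dest: bij_betw_apply)
  have side: "i div n = of_bool (n \<le> i)" if "i < 2 * n" for i
    using that \<open>n \<ge> 1\<close> by (auto simp: le_div_geq div_eq_0_iff)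
  have into: "tensor_Knn_label n N f A ` ({0..<2 * n} \<times> V) \<subseteq> {0..<2 * (N * n)}"
  proof clarsimp
    fix i v assume "i < 2 * n" "v \<in> V"
    then have "f v + N * (i mod n) < N * n"
      using fV \<open>n \<ge> 1\<close> by (simp add: add_mult_less_mult)
    then show "tensor_Knn_label n N f A (i, v) < 2 * (N * n)"
      unfolding tensor_Knn_label_def by (simp add: add_mult_less_mult)
  qed
  have "inj_on (tensor_Knn_label n N f A) ({0..<2 * n} \<times> V)"
  proof (rule inj_onI, clarsimp)
    fix i v j w
    assume i: "i < 2 * n" "v \<in> V" and j: "j < 2 * n" "w \<in> V"
      and eq: "tensor_Knn_label n N f A (i, v) = tensor_Knn_label n N f A (j, w)"
    have bit_lt: "of_bool P < (2::nat)" for P by simp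
    have bit: "((n \<le> i) \<noteq> (v \<in> A)) = ((n \<le> j) \<noteq> (w \<in> A))"
      and high: "f v + N * (i mod n) = f w + N * (j mod n)"
      using eq unfolding tensor_Knn_label_def prod.case add_mult_eq_add_mult_iff[OF bit_lt bit_lt]
      by (simp_all add: of_bool_eq_iff)
    then have "f v = f w" and mod: "i mod n = j mod n"
      using fV i j by (simp_all add: add_mult_eq_add_mult_iff)
    then have "v = w"
      using f i j by (metis bij_betw_imp_inj_on inj_onD)
    then have "i div n = j div n"
      using bit side i j by auto
    with mod have "i = j"
      by (metis div_mult_mod_eq)
    with \<open>v = w\<close> show "i = j \<and> v = w" by simp
  qed
  moreover have "card ({0..<2 * n} \<times> V) = 2 * (N * n)"
    using bij_betw_same_card[OF f] bij_betw_finite[OF f] by (simp add: card_cartesian_product)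
  ultimately show ?thesis
    using into by (simp add: bij_betw_def card_image card_subset_eq)
qed

lemma verts_tensor_Knn: "verts (tensor (Knn n) G) = {0..<2 * n} \<times> verts G"
  by (simp add: tensor_def verts_def Knn_def)

lemma edges_tensor_Knn_iff:
  "((i, v), (j, w)) \<in> edges (tensor (Knn n) G) \<longleftrightarrow>
     i < 2 * n \<and> j < 2 * n \<and> (n \<le> i \<longleftrightarrow> j < n) \<and> (v, w) \<in> edges G"
  by (auto simp: tensor_def edges_def Knn_def)

lemma circulant_labelling_tensor_Knn:
  assumes G: "circulant_labelling G N f Q" and A: "\<forall>(u, v)\<in>edges G. u \<in> A \<longleftrightarrow> v \<notin> A"
    and "n \<ge> 1"
  shows "circulant_labelling (tensor (Knn n) G) (2 * (N * n)) (tensor_Knn_label n N f A)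
           (\<lambda>d. even d \<and> Q (d div 2))"
proof -
  have "N \<ge> 1" and Q: "periodic_symmetric N Q" and f: "bij_betw f (verts G) {0..<N}"
    and E: "\<And>v w. v \<in> verts G \<Longrightarrow> w \<in> verts G \<Longrightarrow> (v, w) \<in> edges G \<longleftrightarrow> Q (int (f v) - int (f w))"
    using G by (auto simp: circulant_labelling_def)
  let ?lab = "tensor_Knn_label n N f A" and ?P = "\<lambda>d. even d \<and> Q (d div 2)"
  have edge: "((i, v), (j, w)) \<in> edges (tensor (Knn n) G) \<longleftrightarrow>
                ?P (int (?lab (i, v)) - int (?lab (j, w)))"
    if "i < 2 * n" "v \<in> verts G" "j < 2 * n" "w \<in> verts G" for i v j w
  proof -
    define b :: int where "b = of_bool ((n \<le> i) \<noteq> (v \<in> A))"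
    define b' :: int where "b' = of_bool ((n \<le> j) \<noteq> (w \<in> A))"
    define D where "D = int (f v) - int (f w) + int N * (int (i mod n) - int (j mod n))"
    have diff: "int (?lab (i, v)) - int (?lab (j, w)) = 2 * D + (b - b')"
      by (simp add: tensor_Knn_label_def b_def b'_def D_def algebra_simps)
    have "even (2 * D + (b - b')) \<longleftrightarrow> b = b'"
      by (auto simp: b_def b'_def)
    moreover have "Q D \<longleftrightarrow> (v, w) \<in> edges G"
      using Q E[OF that(2,4)] by (simp add: D_def periodic_symmetric_def)
    moreover have "(v, w) \<in> edges G \<Longrightarrow> b = b' \<longleftrightarrow> (n \<le> i \<longleftrightarrow> j < n)"
      using A by (auto simp: b_def b'_def)
    ultimately show ?thesis
      using that by (auto simp: diff edges_tensor_Knn_iff)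
  qed
  show ?thesis
    unfolding circulant_labelling_def verts_tensor_Knn
  proof (intro conjI ballI)
    show "2 * (N * n) \<ge> 1"
      using \<open>N \<ge> 1\<close> \<open>n \<ge> 1\<close> by simp
    show "periodic_symmetric (2 * (N * n)) ?P"
      by (rule periodic_symmetric_double[OF periodic_symmetric_mult[OF Q]])
    show "bij_betw ?lab ({0..<2 * n} \<times> verts G) {0..<2 * (N * n)}"
      by (rule bij_betw_tensor_Knn_label[OF f \<open>n \<ge> 1\<close>])
  next
    fix x y assume "x \<in> {0..<2 * n} \<times> verts G" and "y \<in> {0..<2 * n} \<times> verts G"
    then show "(x, y) \<in> edges (tensor (Knn n) G) \<longleftrightarrow> ?P (int (?lab x) - int (?lab y))"
      using edge by (metis SigmaE atLeastLessThan_iff)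
  qed
qed

theorem theorem7:
  fixes G :: "'a graph" and n :: nat
  assumes "is_graph G" and "connected_graph G" and "bipartite G" and "circulant G"
    and "n \<ge> 1"
  shows "circulant (tensor (Knn n) G)"
proof -
  obtain N f Q where "circulant_labelling G N f Q"
    using \<open>circulant G\<close> by (auto simp: circulant_iff_labelling)
  moreover obtain A where "\<forall>(u, v)\<in>edges G. u \<in> A \<longleftrightarrow> v \<notin> A"
    using \<open>bipartite G\<close> by (auto simp: bipartite_def)
  ultimately have "circulant_labelling (tensor (Knn n) G) (2 * (N * n)) (tensor_Knn_label n N f A)
                      (\<lambda>d. even d \<and> Q (d div 2))"
    using circulant_labelling_tensor_Knn \<open>n \<ge> 1\<close> by blast
  then show ?thesis
    unfolding circulant_iff_labelling by blast
qed

end
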